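(* Let $G$ be a (not necessarily connected) graph on $n\ge1$ vertices with adjacency matrix $A$, let $m\ge1$, and let $\alpha\in\mathbb{R}\setminus(\mathrm{ev}(A)\cup\{0,-m,-2m\})$. Then there exist $\mu\in\mathbb{R}$, $f\in\mathbb{R}^m$, $g\in\mathbb{R}^n$ with \[ (J_m+\alpha I)f=\tfrac{\mu}{2}\mathbf 1,\quad (A-J_n-\alpha I)g=-\tfrac{\mu}{2}\mathbf 1,\quad \langle f,f\rangle+\langle g,g\rangle=1,\quad \langle\mathbf 1,f\rangle+\langle\mathbf 1,g\rangle=0 \] if and only if \[ (\alpha+2m)\langle\mathbf 1,(A-\alpha I)^{-1}\mathbf 1\rangle-m=0. \]
   Context: $\mathrm{ev}(A)$ is the set of eigenvalues of $A$; $J_k$ the $k\times k$ all-ones matrix; $\mathbf 1$ the all-ones vector of the appropriate size; $I$ the identity. *)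

theory Defs
  imports "HOL-Analysis.Analysis"
begin

definition simple_graph :: "('n \<Rightarrow> 'n \<Rightarrow> bool) \<Rightarrow> bool" where
  "simple_graph E \<longleftrightarrow> (\<forall>u v. E u v \<longrightarrow> E v u) \<and> (\<forall>v. \<not> E v v)"

definition adjacency_matrix :: "('n \<Rightarrow> 'n \<Rightarrow> bool) \<Rightarrow> real^'n^'n" where
  "adjacency_matrix E = (\<chi> i j. if E i j then 1 else 0)"

definition ev :: "real^'n^'n \<Rightarrow> real set" where
  "ev A = {c. \<exists>v. v \<noteq> 0 \<and> A *v v = c *\<^sub>R v}"

definition Jmat :: "real^'n^'n" where
  "Jmat = (\<chi> i j. 1)"

end

theory Submission
  imports Defs
begin

text \<open>Since \<open>\<alpha> \<noteq> 0\<close>, the first equation forces \<open>f = c \<one>\<close>; since \<open>M = A - \<alpha> I\<close> is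
  invertible, the second forces \<open>g\<close> to be a multiple of \<open>w = M\<^sup>-\<^sup>1 \<one>\<close>. The condition
  \<open>\<langle>\<one>, f\<rangle> + \<langle>\<one>, g\<rangle> = 0\<close> then pins \<open>g = -c (\<alpha> + 2m) w\<close>, and computing \<open>\<langle>\<one>, g\<rangle>\<close> once
  more yields \<open>c ((\<alpha> + 2m) \<langle>\<one>, w\<rangle> - m) = 0\<close>. The normalisation excludes \<open>c = 0\<close>;
  conversely, under the scalar condition every \<open>c \<noteq> 0\<close> solves all equations
  but the normalisation, which then fixes \<open>c\<close>.\<close>

lemma Jmat_mult_vec: "(Jmat :: real^'a^'a) *v x = (vec 1 \<bullet> x) *\<^sub>R vec 1"
  by (simp add: vec_eq_iff matrix_vector_mult_def Jmat_def inner_vec_def)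

lemma inner_one_self_vec: "(1 :: real^'a) \<bullet> 1 = real CARD('a)"
  by (simp add: inner_vec_def)

lemma matrix_minus_scalar_mult_vec:
  fixes A :: "real^'n^'n"
  shows "(A - c *\<^sub>R mat 1) *v v = A *v v - c *\<^sub>R v"
  by (simp add: algebra_simps scaleR_matrix_vector_assoc[symmetric])

lemma invertible_minus_scalar_if_not_ev:
  fixes A :: "real^'n^'n"
  assumes "c \<notin> ev A"
  shows "invertible (A - c *\<^sub>R mat 1)"
proof -
  have "x = 0" if "(A - c *\<^sub>R mat 1) *v x = 0" for x
  proof (rule ccontr)
    assume "x \<noteq> 0"
    moreover have "A *v x = c *\<^sub>R x"
      using that by (simp add: matrix_minus_scalar_mult_vec)
    ultimately have "c \<in> ev A"
      unfolding ev_def by blast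
    with assms show False ..
  qed
  then show ?thesis
    using matrix_left_invertible_ker invertible_left_inverse by blast
qed

lemma matrix_inv_mult_vec_iff:
  fixes M :: "real^'n^'n"
  assumes "invertible M"
  shows "M *v x = y \<longleftrightarrow> x = matrix_inv M *v y"
proof -
  have "M ** matrix_inv M = mat 1 \<and> matrix_inv M ** M = mat 1"
    using assms unfolding matrix_inv_def invertible_def by (rule someI_ex)
  then show ?thesis
    by (metis matrix_vector_mul_assoc matrix_vector_mul_lid)
qed

lemma Jmat_plus_scalar_mult_vec_eq_const_iff:
  fixes f :: "real^'a"
  assumes "\<alpha> \<noteq> 0"
  shows "(Jmat + \<alpha> *\<^sub>R mat 1) *v f = b *\<^sub>R vec 1
    \<longleftrightarrow> (\<exists>c. f = c *\<^sub>R vec 1 \<and> c * (real CARD('a) + \<alpha>) = b)"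
proof -
  have lhs: "(Jmat + \<alpha> *\<^sub>R mat 1) *v f = (vec 1 \<bullet> f) *\<^sub>R vec 1 + \<alpha> *\<^sub>R f"
    by (simp add: algebra_simps Jmat_mult_vec scaleR_matrix_vector_assoc[symmetric])
  show ?thesis
    unfolding lhs
  proof
    assume "(vec 1 \<bullet> f) *\<^sub>R vec 1 + \<alpha> *\<^sub>R f = b *\<^sub>R vec 1"
    then have "\<alpha> *\<^sub>R f = (b - vec 1 \<bullet> f) *\<^sub>R vec 1"
      by (simp add: algebra_simps)
    then have "(1 / \<alpha>) *\<^sub>R (\<alpha> *\<^sub>R f) = (1 / \<alpha>) *\<^sub>R ((b - vec 1 \<bullet> f) *\<^sub>R vec 1)"
      by simp
    then have f: "f = ((b - vec 1 \<bullet> f) / \<alpha>) *\<^sub>R vec 1"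
      using assms by simp
    then have "vec 1 \<bullet> f = (b - vec 1 \<bullet> f) / \<alpha> * real CARD('a)"
      by (metis inner_scaleR_right inner_one_self_vec vec_1)
    then have "(b - vec 1 \<bullet> f) / \<alpha> * (real CARD('a) + \<alpha>) = b"
      using assms by (simp add: field_simps)
    with f show "\<exists>c. f = c *\<^sub>R vec 1 \<and> c * (real CARD('a) + \<alpha>) = b"
      by blast
  next
    assume "\<exists>c. f = c *\<^sub>R vec 1 \<and> c * (real CARD('a) + \<alpha>) = b"
    then show "(vec 1 \<bullet> f) *\<^sub>R vec 1 + \<alpha> *\<^sub>R f = b *\<^sub>R vec 1"
      by (auto simp: inner_vec_def algebra_simps)
  qed
qed

lemma minus_Jmat_mult_vec_eq_const_iff:
  fixes M :: "real^'n^'n"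
  assumes "invertible M"
  shows "(M - Jmat) *v g = b *\<^sub>R vec 1 \<longleftrightarrow> g = (vec 1 \<bullet> g + b) *\<^sub>R (matrix_inv M *v vec 1)"
proof -
  have "(M - Jmat) *v g = b *\<^sub>R vec 1 \<longleftrightarrow> M *v g = (vec 1 \<bullet> g + b) *\<^sub>R vec 1"
    by (auto simp: matrix_vector_mult_diff_rdistrib Jmat_mult_vec algebra_simps)
  also have "\<dots> \<longleftrightarrow> g = (vec 1 \<bullet> g + b) *\<^sub>R (matrix_inv M *v vec 1)"
    using assms by (simp add: matrix_inv_mult_vec_iff matrix_vector_mult_scaleR)
  finally show ?thesis .
qed

lemma coupled_system_iff:
  fixes M :: "real^'n^'n" and f :: "real^'m"
  assumes M: "invertible M" and \<alpha>: "\<alpha> \<noteq> 0"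
  defines "k \<equiv> real CARD('m)" and "w \<equiv> matrix_inv M *v vec 1"
  shows "(Jmat + \<alpha> *\<^sub>R mat 1) *v f = (\<mu> / 2) *\<^sub>R vec 1 \<and>
      (M - Jmat) *v g = - (\<mu> / 2) *\<^sub>R vec 1 \<and> vec 1 \<bullet> f + vec 1 \<bullet> g = 0
    \<longleftrightarrow> (\<exists>c. f = c *\<^sub>R vec 1 \<and> g = (- c * (\<alpha> + 2 * k)) *\<^sub>R w \<and> \<mu> = 2 * c * (\<alpha> + k) \<and>
      c * ((\<alpha> + 2 * k) * (vec 1 \<bullet> w) - k) = 0)"
    (is "?system \<longleftrightarrow> (\<exists>c. ?shape c)")
proof
  assume ?system
  then have E1: "(Jmat + \<alpha> *\<^sub>R mat 1) *v f = (\<mu> / 2) *\<^sub>R vec 1"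
    and E2: "(M - Jmat) *v g = - (\<mu> / 2) *\<^sub>R vec 1" and sum: "vec 1 \<bullet> f + vec 1 \<bullet> g = 0"
    by blast+
  obtain c where f: "f = c *\<^sub>R vec 1" and "c * (k + \<alpha>) = \<mu> / 2"
    using E1 Jmat_plus_scalar_mult_vec_eq_const_iff[OF \<alpha>] unfolding k_def by blast
  then have \<mu>: "\<mu> = 2 * c * (\<alpha> + k)"
    by (simp add: algebra_simps)
  have g: "g = (vec 1 \<bullet> g + - (\<mu> / 2)) *\<^sub>R w"
    using E2 minus_Jmat_mult_vec_eq_const_iff[OF M] unfolding w_def by blast
  have "vec 1 \<bullet> g = - c * k"
    using sum by (simp add: f inner_one_self_vec k_def)
  with \<mu> have "vec 1 \<bullet> g + - (\<mu> / 2) = - c * (\<alpha> + 2 * k)"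
    by (simp add: algebra_simps)
  with g have g': "g = (- c * (\<alpha> + 2 * k)) *\<^sub>R w"
    by metis
  then have "vec 1 \<bullet> g = - c * (\<alpha> + 2 * k) * (vec 1 \<bullet> w)"
    by simp
  with \<open>vec 1 \<bullet> g = - c * k\<close> have "c * ((\<alpha> + 2 * k) * (vec 1 \<bullet> w) - k) = 0"
    by (simp add: algebra_simps)
  with f g' \<mu> show "\<exists>c. ?shape c"
    by blast
next
  assume "\<exists>c. ?shape c"
  then obtain c where f: "f = c *\<^sub>R vec 1" and g: "g = (- c * (\<alpha> + 2 * k)) *\<^sub>R w"
    and \<mu>: "\<mu> = 2 * c * (\<alpha> + k)" and cond: "c * ((\<alpha> + 2 * k) * (vec 1 \<bullet> w) - k) = 0"
    by blast
  have "vec 1 \<bullet> g = - c * ((\<alpha> + 2 * k) * (vec 1 \<bullet> w))"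
    by (simp add: g)
  also have "\<dots> = - c * k"
    using cond by (simp add: algebra_simps)
  finally have sum_g: "vec 1 \<bullet> g = - c * k" .
  have "c * (k + \<alpha>) = \<mu> / 2"
    by (simp add: \<mu> algebra_simps)
  with f have "(Jmat + \<alpha> *\<^sub>R mat 1) *v f = (\<mu> / 2) *\<^sub>R vec 1"
    using Jmat_plus_scalar_mult_vec_eq_const_iff[OF \<alpha>] unfolding k_def by blast
  moreover have "vec 1 \<bullet> g + - (\<mu> / 2) = - c * (\<alpha> + 2 * k)"
    using sum_g by (simp add: \<mu> algebra_simps)
  with g have "(M - Jmat) *v g = - (\<mu> / 2) *\<^sub>R vec 1"
    using minus_Jmat_mult_vec_eq_const_iff[OF M] unfolding w_def by metis
  moreover have "vec 1 \<bullet> f + vec 1 \<bullet> g = 0"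
    using sum_g by (simp add: f inner_one_self_vec k_def)
  ultimately show ?system
    by blast
qed

lemma normalised_coupled_system_solvable_iff:
  fixes M :: "real^'n^'n"
  assumes M: "invertible M" and \<alpha>: "\<alpha> \<noteq> 0"
  defines "k \<equiv> real CARD('m)" and "w \<equiv> matrix_inv M *v vec 1"
  shows "(\<exists>\<mu> (f::real^'m) g. (Jmat + \<alpha> *\<^sub>R mat 1) *v f = (\<mu> / 2) *\<^sub>R vec 1 \<and>
      (M - Jmat) *v g = - (\<mu> / 2) *\<^sub>R vec 1 \<and> f \<bullet> f + g \<bullet> g = 1 \<and>
      vec 1 \<bullet> f + vec 1 \<bullet> g = 0)
    \<longleftrightarrow> (\<alpha> + 2 * k) * (vec 1 \<bullet> w) - k = 0"
    (is "?solvable \<longleftrightarrow> ?scalar")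
proof -
  have norm: "f \<bullet> f + g \<bullet> g = c\<^sup>2 * (k + (\<alpha> + 2 * k)\<^sup>2 * (w \<bullet> w))"
    if "f = c *\<^sub>R (vec 1 :: real^'m)" and "g = (- c * (\<alpha> + 2 * k)) *\<^sub>R w" for c f g
    unfolding that by (simp add: inner_one_self_vec k_def power2_eq_square algebra_simps)
  note system = coupled_system_iff[OF M \<alpha>, where 'm='m, folded k_def w_def]
  show ?thesis
  proof
    assume ?solvable
    then obtain \<mu> c and f :: "real^'m" and g where "f \<bullet> f + g \<bullet> g = 1"
      and f: "f = c *\<^sub>R vec 1" and g: "g = (- c * (\<alpha> + 2 * k)) *\<^sub>R w"
      and cond: "c * ((\<alpha> + 2 * k) * (vec 1 \<bullet> w) - k) = 0"
      using system by blast
    with norm[OF f g] have "c \<noteq> 0"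
      by auto
    with cond show ?scalar
      by simp
  next
    assume cond: ?scalar
    define N where "N = k + (\<alpha> + 2 * k)\<^sup>2 * (w \<bullet> w)"
    have "N > 0"
      unfolding N_def k_def by (simp add: add_pos_nonneg)
    define c where "c = 1 / sqrt N"
    have "c\<^sup>2 * N = 1"
      unfolding c_def using \<open>N > 0\<close> by (simp add: power_divide)
    let ?f = "c *\<^sub>R vec 1 :: real^'m" and ?g = "(- c * (\<alpha> + 2 * k)) *\<^sub>R w"
    have "(Jmat + \<alpha> *\<^sub>R mat 1) *v ?f = (2 * c * (\<alpha> + k) / 2) *\<^sub>R vec 1 \<and>
      (M - Jmat) *v ?g = - (2 * c * (\<alpha> + k) / 2) *\<^sub>R vec 1 \<and> vec 1 \<bullet> ?f + vec 1 \<bullet> ?g = 0"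
      using cond by (intro iffD2[OF system] exI[of _ c]) simp
    moreover have "?f \<bullet> ?f + ?g \<bullet> ?g = 1"
      using norm[OF refl refl] \<open>c\<^sup>2 * N = 1\<close> unfolding N_def by simp
    ultimately show ?solvable
      by blast
  qed
qed

theorem lemma3p4:
  fixes E :: "'n::finite \<Rightarrow> 'n \<Rightarrow> bool" and A :: "real^'n^'n"
    and \<alpha> :: real and m :: nat
  assumes "simple_graph E"
    and "A = adjacency_matrix E"
    and "CARD('m::finite) = m"
    and "m \<ge> 1"
    and "\<alpha> \<notin> ev A" and "\<alpha> \<noteq> 0" and "\<alpha> \<noteq> - real m" and "\<alpha> \<noteq> - 2 * real m"
  shows "(\<exists>(\<mu>::real) (f::real^'m) (g::real^'n).
            (Jmat + \<alpha> *\<^sub>R mat 1) *v f = (\<mu> / 2) *\<^sub>R vec 1 \<and>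
            (A - Jmat - \<alpha> *\<^sub>R mat 1) *v g = - (\<mu> / 2) *\<^sub>R vec 1 \<and>
            f \<bullet> f + g \<bullet> g = 1 \<and>
            vec 1 \<bullet> f + vec 1 \<bullet> g = 0)
     \<longleftrightarrow> (\<alpha> + 2 * real m) * (vec 1 \<bullet> (matrix_inv (A - \<alpha> *\<^sub>R mat 1) *v vec 1)) - real m = 0"
proof -
  have "invertible (A - \<alpha> *\<^sub>R mat 1)"
    using \<open>\<alpha> \<notin> ev A\<close> by (rule invertible_minus_scalar_if_not_ev)
  note solvable_iff = normalised_coupled_system_solvable_iff[OF this \<open>\<alpha> \<noteq> 0\<close>]
  have shift: "A - Jmat - \<alpha> *\<^sub>R mat 1 = (A - \<alpha> *\<^sub>R mat 1) - Jmat"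
    by (simp add: algebra_simps)
  show ?thesis
    unfolding shift \<open>CARD('m) = m\<close>[symmetric] by (rule solvable_iff)
qed

end
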